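(* Let $n,m\in\mathbb{N}$ and let $(A_1,B_1)\neq(A_2,B_2)$ be two pairs in $X_n^\star\times X_m^\star$ such that $A_1B_1=T^kA_2B_2$ for some $k\in\mathbb{Z}$. Then the entries of the matrix $A_1B_1$ have a common divisor strictly larger than $1$.
   Context: $T=\begin{pmatrix}1&1\\0&1\end{pmatrix}$. $X_N^\star=\{\begin{pmatrix}c&b\\0&N/c\end{pmatrix}:c\ge1,\ c\mid N,\ 0\le b\le N/c-1,\ \gcd(c,b,N/c)=1\}$. *)

theory Defs
  imports "HOL-Analysis.Analysis"
begin

text \<open>2x2 integer matrices are represented as int^2^2; mat2 a b c d is the matrix
  with rows (a, b) and (c, d). Matrix product is the library's (**).\<close>

definition mat2 :: "int \<Rightarrow> int \<Rightarrow> int \<Rightarrow> int \<Rightarrow> int^2^2" where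
  "mat2 a b c d = vector [vector [a, b], vector [c, d]]"

definition T_mat :: "int^2^2" where
  "T_mat = mat2 1 1 0 1"

definition T_pow :: "int \<Rightarrow> int^2^2" where
  "T_pow k = mat2 1 k 0 1"

definition Xstar :: "nat \<Rightarrow> (int^2^2) set" where
  "Xstar N = {mat2 c b 0 (int N div c) | c b.
      c \<ge> 1 \<and> c dvd int N \<and> 0 \<le> b \<and> b \<le> int N div c - 1 \<and>
      gcd (gcd c b) (int N div c) = 1}"

end

theory Submission
  imports Defs
begin

text \<open>Write \<open>A\<^sub>i = [[c\<^sub>i, b\<^sub>i], [0, d\<^sub>i]]\<close> and \<open>B\<^sub>i = [[e\<^sub>i, f\<^sub>i], [0, g\<^sub>i]]\<close>.
  Every common divisor of \<open>c\<^sub>i\<close> and \<open>g\<^sub>i\<close> divides all entries of \<open>A\<^sub>i B\<^sub>i\<close>, so if the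
  entries of \<open>A\<^sub>1 B\<^sub>1\<close> (equivalently, of \<open>T\<^sup>k A\<^sub>2 B\<^sub>2\<close>) were coprime, then \<open>c\<^sub>i\<close> and \<open>g\<^sub>i\<close>
  would be coprime and \<open>e\<^sub>i = gcd (c\<^sub>i e\<^sub>i) m\<close> would be determined by the common upper
  left entry of the products. Then all diagonal entries agree, and reducing the upper
  right entries \<open>c f\<^sub>i + b\<^sub>i g\<close> first modulo \<open>g\<close> and then modulo \<open>d g\<close> forces \<open>f\<^sub>1 = f\<^sub>2\<close> and
  \<open>b\<^sub>1 = b\<^sub>2\<close>, since these are reduced residues.\<close>

definition primitive_matrix :: "int^'n^'m \<Rightarrow> bool" where
  "primitive_matrix M \<longleftrightarrow> \<not> (\<exists>d > 1. \<forall>i j. d dvd M $ i $ j)"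

lemma mat2_nth [simp]:
  "mat2 a b c d $ 1 $ 1 = a" "mat2 a b c d $ 1 $ 2 = b"
  "mat2 a b c d $ 2 $ 1 = c" "mat2 a b c d $ 2 $ 2 = d"
  unfolding mat2_def by simp_all

lemma mat2_eq_iff:
  "mat2 a b c d = mat2 a' b' c' d' \<longleftrightarrow> a = a' \<and> b = b' \<and> c = c' \<and> d = d'"
  by (metis mat2_nth)

lemma mat2_mult:
  "mat2 a b c d ** mat2 a' b' c' d' =
     mat2 (a * a' + b * c') (a * b' + b * d') (c * a' + d * c') (c * b' + d * d')"
  by (simp add: vec_eq_iff forall_2 matrix_matrix_mult_def sum_2)

lemma T_pow_mult_upper: "T_pow k ** mat2 a b 0 d = mat2 a (b + k * d) 0 d"
  by (simp add: T_pow_def mat2_mult)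

lemma dvd_entries_matrix_mult_left:
  fixes M :: "'a::comm_ring_1^'p^'n" and N :: "'a^'n^'m"
  assumes "\<forall>i j. x dvd M $ i $ j"
  shows "\<forall>i j. x dvd (N ** M) $ i $ j"
  using assms by (simp add: matrix_matrix_mult_def dvd_sum)

lemma primitive_matrix_mult_right:
  fixes M :: "int^'p^'n" and N :: "int^'n^'m"
  assumes "primitive_matrix (N ** M)"
  shows "primitive_matrix M"
  using assms dvd_entries_matrix_mult_left unfolding primitive_matrix_def by blast

lemma coprime_if_primitive_upper_mult:
  assumes "primitive_matrix (mat2 c b 0 d ** mat2 e f 0 g)"
  shows "coprime c g"
proof (rule ccontr)
  assume "\<not> coprime c g"
  then have "gcd c g \<noteq> 1"
    by (simp add: coprime_iff_gcd_eq_1)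
  obtain x :: int where "x > 1" "\<forall>i j. x dvd (mat2 c b 0 d ** mat2 e f 0 g) $ i $ j"
  proof (cases "gcd c g = 0")
    case True
    then show ?thesis
      by (intro that[of 2]) (simp_all add: mat2_mult forall_2)
  next
    case False
    then have "gcd c g > 1"
      using \<open>gcd c g \<noteq> 1\<close> gcd_ge_0_int[of c g] by linarith
    then show ?thesis
      by (intro that[of "gcd c g"]) (simp_all add: mat2_mult forall_2)
  qed
  then show False
    using assms unfolding primitive_matrix_def by blast
qed

lemma eq_if_dvd_diff_bounded:
  fixes x y g :: int
  assumes "0 \<le> x" "x < g" "0 \<le> y" "y < g" "g dvd x - y"
  shows "x = y"
  using assms by (metis mod_eq_dvd_iff mod_pos_pos_trivial)

lemma Xstar_elim:
  assumes "A \<in> Xstar N"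
  obtains c b d where "A = mat2 c b 0 d" "c \<ge> 1" "d \<ge> 1" "c * d = int N" "0 \<le> b" "b < d"
proof -
  from assms obtain c b where "A = mat2 c b 0 (int N div c)" "c \<ge> 1" "c dvd int N"
    "0 \<le> b" "b \<le> int N div c - 1"
    unfolding Xstar_def by blast
  then show ?thesis
    by (intro that[of c b "int N div c"]) auto
qed

lemma coprime_factor_eq_gcd:
  fixes c e g :: int
  assumes "coprime c g" "e \<ge> 0"
  shows "gcd (c * e) (e * g) = e"
  using assms by (simp add: gcd_mult_left mult.commute[of c] coprime_iff_gcd_eq_1)

lemma Xstar_factors_unique:
  assumes A1: "A1 \<in> Xstar n" and A2: "A2 \<in> Xstar n"
    and B1: "B1 \<in> Xstar m" and B2: "B2 \<in> Xstar m"
    and eq: "A1 ** B1 = T_pow k ** (A2 ** B2)"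
    and prim: "primitive_matrix (A1 ** B1)"
  shows "A1 = A2 \<and> B1 = B2"
proof -
  obtain c1 b1 d1 where A1': "A1 = mat2 c1 b1 0 d1" "c1 \<ge> 1" "d1 \<ge> 1" "0 \<le> b1" "b1 < d1"
    using Xstar_elim[OF A1] by metis
  obtain c2 b2 d2 where A2': "A2 = mat2 c2 b2 0 d2" "0 \<le> b2" "b2 < d2"
    using Xstar_elim[OF A2] by metis
  obtain e1 f1 g1 where B1': "B1 = mat2 e1 f1 0 g1" "e1 \<ge> 1" "e1 * g1 = int m" "0 \<le> f1" "f1 < g1"
    using Xstar_elim[OF B1] by metis
  obtain e2 f2 g2 where B2': "B2 = mat2 e2 f2 0 g2" "e2 \<ge> 1" "e2 * g2 = int m" "0 \<le> f2" "f2 < g2"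
    using Xstar_elim[OF B2] by metis
  have entries: "c1 * e1 = c2 * e2" "d1 * g1 = d2 * g2"
    "c1 * f1 + b1 * g1 = c2 * f2 + (b2 + k * d2) * g2"
    using eq by (simp_all add: A1' A2' B1' B2' mat2_mult T_pow_mult_upper mat2_eq_iff algebra_simps)
  have cop1: "coprime c1 g1"
    using prim A1' B1' coprime_if_primitive_upper_mult by metis
  have cop2: "coprime c2 g2"
    using primitive_matrix_mult_right[of "T_pow k"] prim eq A2' B2' coprime_if_primitive_upper_mult
    by metis
  have ee: "e1 = e2"
  proof -
    have "e1 = gcd (c1 * e1) (e1 * g1)"
      using coprime_factor_eq_gcd[OF cop1] B1'(2) by simp
    also have "\<dots> = gcd (c2 * e2) (e2 * g2)"
      using entries(1) B1'(3) B2'(3) by simp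
    also have "\<dots> = e2"
      using coprime_factor_eq_gcd[OF cop2] B2'(2) by simp
    finally show ?thesis .
  qed
  have gg: "g1 = g2"
    using ee B1'(2,3) B2'(3) by (metis mult_cancel_left not_one_le_zero)
  have cc: "c1 = c2"
    using ee B1'(2) entries(1) by simp
  have dd: "d1 = d2"
    using gg B1'(4,5) entries(2) by simp
  note diag = ee gg cc dd
  have "c1 * (f1 - f2) = g1 * (b2 - b1 + k * d1)"
    using entries(3) diag by (simp add: algebra_simps)
  then have "g1 dvd c1 * (f1 - f2)"
    by simp
  then have "g1 dvd f1 - f2"
    using cop1 by (simp add: coprime_dvd_mult_right_iff coprime_commute)
  then have ff: "f1 = f2"
    using eq_if_dvd_diff_bounded[of f1 g1 f2] B1'(4,5) B2'(4,5) gg by simp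
  have "(b1 - b2 - k * d1) * g1 = 0"
    using entries(3) diag ff by (simp add: algebra_simps)
  then have "b1 - b2 = d1 * k"
    using B1'(4,5) by simp
  then have "d1 dvd b1 - b2"
    by (metis dvd_triv_left)
  then have bb: "b1 = b2"
    using eq_if_dvd_diff_bounded[of b1 d1 b2] A1'(4,5) A2'(2,3) dd by simp
  then show ?thesis
    using A1' A2' B1' B2' diag ff bb by simp
qed

theorem mainTheorem15:
  fixes n m :: nat and A1 B1 A2 B2 :: "int^2^2" and k :: int
  assumes "A1 \<in> Xstar n" and "B1 \<in> Xstar m"
    and "A2 \<in> Xstar n" and "B2 \<in> Xstar m"
    and "(A1, B1) \<noteq> (A2, B2)"
    and "A1 ** B1 = T_pow k ** (A2 ** B2)"
  shows "\<exists>d::int. d > 1 \<and> (\<forall>i j. d dvd (A1 ** B1) $ i $ j)"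
proof -
  have "\<not> primitive_matrix (A1 ** B1)"
    using Xstar_factors_unique assms by blast
  then show ?thesis
    unfolding primitive_matrix_def by blast
qed

end
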